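(* Let $\mathcal I$ be a canonical instance with groups $G_1,\dots,G_k$, group weights $w_1>\cdots>w_k$, sizes $n_1,\dots,n_k$, $W_q=n_qw_q$, $L_1=0$ and $L_r=\sum_{q<r}W_q/w_r$ for $r\ge2$. Fix $i\in[k]$ and define the proxy cost $v^\star_i$ on items by $v^\star_i(e_h)=w_i$ if $h\le L_i+n_i$; $v^\star_i(e_h)=w_s$ if $L_i+n_i+\cdots+n_{s-1}<h\le L_i+n_i+\cdots+n_s$ for $s=i+1,\dots,k$; and $v^\star_i(e_h)=0$ if $h>L_i+n_i+\cdots+n_k$; extend additively. Let $a$ be any agent of group $G_i$ with cost function $v$, and let $d$ be the largest index $h$ with $v(e_h)>w_i$ (with $d=0$ if there is none). Then for every integer $t$ with $d<t\le m$, $$\sum_{h=d+1}^{t}v(e_h)\le\sum_{h=d+1}^{t}v^\star_i(e_h).$$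
   Context: Chore-allocation instance: agents, a finite set $\mathcal M=\{e_1,\dots,e_m\}$ of indivisible items, positive weights, additive cost functions $v:2^{\mathcal M}\to\mathbb R_{\ge0}$. The weighted maximin share of agent $a$ with weight $w_a$ and cost $v_a$ is $\mathsf{WMMS}_a=w_a\min_{\text{allocations }(B_b)_b}\max_{b}\frac{v_a(B_b)}{w_b}$, allocations being ordered partitions of $\mathcal M$ into one (possibly empty) bundle per agent. An instance is canonical if: (i) $\max$ weight is $w_1$, weights sum to $1$, and every weight equals $w_1/2^p$ for some nonnegative integer $p$; (ii) every agent's total cost $v(\mathcal M)=1$, and every single-item cost is either $0$ or $w_1/2^p$ for some nonnegative integer $p$; (iii) every agent has $v(e_1)\ge\cdots\ge v(e_m)$; (iv) every agent's $\mathsf{WMMS}$ equals her weight. Agents are partitioned into groups $G_1,\dots,G_k$ by weight, all agents of $G_i$ having weight $w_i$, with $w_1>\cdots>w_k$, and $n_i=|G_i|$. *)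

theory Defs
  imports Complex_Main "HOL-Library.FuncSet"
begin

text \<open>Agents form a finite set A (of an arbitrary type), items are e_1,...,e_m,
  represented by the natural numbers 1..m.
  An allocation is a map from items {1..m} to agents A (bundle of b = preimage of b).\<close>

definition bundle_cost :: "('ag \<Rightarrow> nat \<Rightarrow> real) \<Rightarrow> 'ag \<Rightarrow> nat \<Rightarrow> (nat \<Rightarrow> 'ag) \<Rightarrow> 'ag \<Rightarrow> real" where
  "bundle_cost v a m f b = (\<Sum>h\<in>{h\<in>{1..m}. f h = b}. v a h)"

definition WMMS :: "'ag set \<Rightarrow> ('ag \<Rightarrow> real) \<Rightarrow> ('ag \<Rightarrow> nat \<Rightarrow> real) \<Rightarrow> nat \<Rightarrow> 'ag \<Rightarrow> real" where
  "WMMS A w v m a = w a *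
     Min ((\<lambda>f. Max ((\<lambda>b. bundle_cost v a m f b / w b) ` A)) ` ({1..m} \<rightarrow>\<^sub>E A))"

definition canonical :: "'ag set \<Rightarrow> ('ag \<Rightarrow> real) \<Rightarrow> ('ag \<Rightarrow> nat \<Rightarrow> real) \<Rightarrow> nat \<Rightarrow> bool" where
  "canonical A w v m \<longleftrightarrow>
     finite A \<and> A \<noteq> {} \<and>
     (\<forall>a\<in>A. w a > 0) \<and>
     (\<forall>a\<in>A. \<forall>h\<in>{1..m}. v a h \<ge> 0) \<and>
     \<comment> \<open>(i)\<close>
     (\<Sum>a\<in>A. w a) = 1 \<and>
     (\<forall>a\<in>A. \<exists>p::nat. w a = Max (w ` A) / 2 ^ p) \<and>
     \<comment> \<open>(ii)\<close>
     (\<forall>a\<in>A. (\<Sum>h\<in>{1..m}. v a h) = 1) \<and>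
     (\<forall>a\<in>A. \<forall>h\<in>{1..m}. v a h = 0 \<or> (\<exists>p::nat. v a h = Max (w ` A) / 2 ^ p)) \<and>
     \<comment> \<open>(iii)\<close>
     (\<forall>a\<in>A. \<forall>h1\<in>{1..m}. \<forall>h2\<in>{1..m}. h1 \<le> h2 \<longrightarrow> v a h2 \<le> v a h1) \<and>
     \<comment> \<open>(iv)\<close>
     (\<forall>a\<in>A. WMMS A w v m a = w a)"

text \<open>Group data: gw 1 > ... > gw k are the distinct weights; group i = agents of weight gw i.\<close>

definition group_size :: "'ag set \<Rightarrow> ('ag \<Rightarrow> real) \<Rightarrow> (nat \<Rightarrow> real) \<Rightarrow> nat \<Rightarrow> nat" where
  "group_size A w gw q = card {a\<in>A. w a = gw q}"

definition Lval :: "'ag set \<Rightarrow> ('ag \<Rightarrow> real) \<Rightarrow> (nat \<Rightarrow> real) \<Rightarrow> nat \<Rightarrow> real" where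
  "Lval A w gw r = (\<Sum>q\<in>{1..<r}. real (group_size A w gw q) * gw q) / gw r"

definition cumul :: "'ag set \<Rightarrow> ('ag \<Rightarrow> real) \<Rightarrow> (nat \<Rightarrow> real) \<Rightarrow> nat \<Rightarrow> nat \<Rightarrow> real" where
  "cumul A w gw i s = Lval A w gw i + (\<Sum>q\<in>{i..s}. real (group_size A w gw q))"

definition vstar :: "'ag set \<Rightarrow> ('ag \<Rightarrow> real) \<Rightarrow> (nat \<Rightarrow> real) \<Rightarrow> nat \<Rightarrow> nat \<Rightarrow> nat \<Rightarrow> real" where
  "vstar A w gw k i h =
     (if real h \<le> cumul A w gw i i then gw i
      else if real h > cumul A w gw i k then 0
      else gw (THE s. s \<in> {i+1..k} \<and> cumul A w gw i (s-1) < real h \<and> real h \<le> cumul A w gw i s))"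

end

theory Submission
  imports Defs
begin

text \<open>Since the WMMS of agent a equals her weight, some allocation gives every agent b a bundle
  of a-cost at most w_b. The items e_1, ..., e_d cost more than w_i each, so they lie in bundles of
  agents of weight at least w_i, whose total weight is (L_i + n_i) w_i; hence d <= L_i + n_i, and
  these heavy bundles keep at most (L_i + n_i - d) w_i for the items after e_d.

  Let t lie in the block where the proxy cost equals theta = w_(s+1) (theta = 0 beyond the last
  block). An item after e_d costs at most theta plus the excess (1 - theta/rho) v(e_h), where rho is
  w_i for a heavy bundle and the bundle's weight for a bundle of weight in [w_s, w_i); bundles
  lighter than w_s only hold items of cost at most theta. Summing the excesses bundle by bundle
  bounds them by (L_i + n_i - d)(w_i - theta) + sum_(q=i+1..s) n_q (w_q - theta), and the resulting
  total is exactly the proxy cost of e_(d+1), ..., e_t. That the blocks of the proxy cost consist of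
  whole items is the integrality of L_i, which holds because all weights are dyadic fractions of w_1.\<close>

lemma sum_in_Nats: "(\<And>x. x \<in> S \<Longrightarrow> g x \<in> \<nat>) \<Longrightarrow> sum g S \<in> \<nat>"
  by (induction S rule: infinite_finite_induct) auto

lemma sum_nat_ivl_split:
  fixes g :: "nat \<Rightarrow> 'a::comm_monoid_add"
  assumes "a \<le> b" "b \<le> c"
  shows "sum g {a+1..c} = sum g {a+1..b} + sum g {b+1..c}"
  using sum.ub_add_nat[of "a+1" b g "c - b"] assms by simp

lemma dyadic_ratio_in_Nats:
  fixes M x y :: real
  assumes "0 < M" "y \<le> x" "x = M / 2 ^ p" "y = M / 2 ^ q"
  shows "x / y \<in> \<nat>"
proof -
  have "p \<le> q"
  proof (rule ccontr)
    assume "\<not> p \<le> q"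
    then have "(2::real) ^ q < 2 ^ p" by simp
    then have "x < y" using assms by (simp add: divide_strict_left_mono)
    then show False using \<open>y \<le> x\<close> by simp
  qed
  then have "x / y = (2::real) ^ (q - p)"
    using assms by (simp add: power_diff)
  also have "\<dots> = of_nat (2 ^ (q - p))" by simp
  finally show ?thesis by (metis of_nat_in_Nats)
qed

lemma Lval_in_Nats:
  fixes M :: real
  assumes "0 < M" and dyadic: "\<And>q. q \<in> {1..i} \<Longrightarrow> \<exists>p::nat. gw q = M / 2 ^ p"
    and heavier: "\<And>q. q \<in> {1..<i} \<Longrightarrow> gw i \<le> gw q"
  shows "Lval A w gw i \<in> \<nat>"
proof -
  have Lval_as_sum: "Lval A w gw i = (\<Sum>q\<in>{1..<i}. real (group_size A w gw q) * (gw q / gw i))"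
    unfolding Lval_def by (simp add: sum_divide_distrib)
  have "gw q / gw i \<in> \<nat>" if q: "q \<in> {1..<i}" for q
  proof -
    obtain p p' where "gw q = M / 2 ^ p" "gw i = M / 2 ^ p'" using dyadic q by fastforce
    with dyadic_ratio_in_Nats \<open>0 < M\<close> heavier[OF q] show ?thesis by blast
  qed
  then show ?thesis unfolding Lval_as_sum by (intro sum_in_Nats Nats_mult) auto
qed

lemma le_add_scaled_excess:
  fixes x g \<theta> :: real
  assumes "0 \<le> \<theta>" "x \<le> g" "0 < g"
  shows "x \<le> \<theta> + (1 - \<theta> / g) * x"
proof -
  have "\<theta> * x \<le> \<theta> * g" using assms by (simp add: mult_left_mono)
  then have "\<theta> * x / g \<le> \<theta>" using assms by (simp add: divide_le_eq)
  then show ?thesis by (simp add: algebra_simps)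
qed

lemma WMMS_le_weight_obtains_allocation:
  assumes A: "finite A" "A \<noteq> {}" and w_pos: "\<And>b. b \<in> A \<Longrightarrow> 0 < w b"
    and a: "a \<in> A" and WMMS_le: "WMMS A w v m a \<le> w a"
  obtains f where "f \<in> {1..m} \<rightarrow>\<^sub>E A" "\<And>b. b \<in> A \<Longrightarrow> bundle_cost v a m f b \<le> w b"
proof -
  define F where "F = {1..m} \<rightarrow>\<^sub>E A"
  define load where "load = (\<lambda>f. Max ((\<lambda>b. bundle_cost v a m f b / w b) ` A))"
  have "finite F" "F \<noteq> {}"
    using A by (simp_all add: F_def finite_PiE PiE_eq_empty_iff)
  then have "Min (load ` F) \<in> load ` F" by (intro Min_in) auto
  then obtain f where f: "f \<in> F" "load f = Min (load ` F)" by (metis imageE)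
  have "w a * load f \<le> w a"
    using WMMS_le unfolding WMMS_def load_def[symmetric] F_def[symmetric] f(2)[symmetric] .
  then have "load f \<le> 1" using w_pos[OF a] by simp
  moreover have "bundle_cost v a m f b / w b \<le> load f" if "b \<in> A" for b
    unfolding load_def using A that by (intro Max_ge) auto
  ultimately have "bundle_cost v a m f b \<le> w b" if "b \<in> A" for b
    using w_pos[OF that] that by (meson divide_le_eq_1_pos order.trans)
  with f(1) show thesis unfolding F_def by (rule that)
qed

locale bounded_allocation =
  fixes A :: "'ag set" and w :: "'ag \<Rightarrow> real" and V :: "nat \<Rightarrow> real" and m :: nat
    and f :: "nat \<Rightarrow> 'ag"
  assumes finite_agents: "finite A"
    and weight_pos: "\<And>b. b \<in> A \<Longrightarrow> 0 < w b"
    and cost_nonneg: "\<And>h. h \<in> {1..m} \<Longrightarrow> 0 \<le> V h"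
    and allocation: "\<And>h. h \<in> {1..m} \<Longrightarrow> f h \<in> A"
    and bundle_le_weight: "\<And>b. b \<in> A \<Longrightarrow> (\<Sum>h\<in>{h\<in>{1..m}. f h = b}. V h) \<le> w b"
begin

lemma item_le_weight: "h \<in> {1..m} \<Longrightarrow> V h \<le> w (f h)"
proof -
  assume h: "h \<in> {1..m}"
  have "V h \<le> (\<Sum>h'\<in>{h'\<in>{1..m}. f h' = f h}. V h')"
    by (rule member_le_sum) (use h cost_nonneg in auto)
  also have "\<dots> \<le> w (f h)" using bundle_le_weight allocation h by auto
  finally show ?thesis .
qed

lemma scaled_cost_le_scaled_weight:
  assumes c_nonneg: "\<And>b. b \<in> A \<Longrightarrow> P b \<Longrightarrow> 0 \<le> c b"
  shows "(\<Sum>h\<in>{h\<in>{1..m}. P (f h)}. c (f h) * V h) \<le> (\<Sum>b\<in>{b\<in>A. P b}. c b * w b)"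
proof -
  have "(\<Sum>h\<in>{h\<in>{1..m}. P (f h)}. c (f h) * V h)
      = (\<Sum>b\<in>{b\<in>A. P b}. \<Sum>h\<in>{h. h \<in> {h\<in>{1..m}. P (f h)} \<and> f h = b}. c (f h) * V h)"
    by (rule sum.group[symmetric]) (use finite_agents allocation in auto)
  also have "\<dots> = (\<Sum>b\<in>{b\<in>A. P b}. c b * (\<Sum>h\<in>{h\<in>{1..m}. f h = b}. V h))"
    by (auto intro!: sum.cong simp: sum_distrib_left)
  also have "\<dots> \<le> (\<Sum>b\<in>{b\<in>A. P b}. c b * w b)"
    by (intro sum_mono mult_left_mono bundle_le_weight c_nonneg) auto
  finally show ?thesis .
qed

end

locale grouped_agent = bounded_allocation +
  fixes gw :: "nat \<Rightarrow> real" and k i Ln :: nat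
  assumes cost_antimono: "\<And>h h'. h \<in> {1..m} \<Longrightarrow> h' \<in> {1..m} \<Longrightarrow> h \<le> h' \<Longrightarrow> V h' \<le> V h"
    and groups: "w ` A = gw ` {1..k}"
    and gw_strict_decr: "\<And>p q. p \<in> {1..k} \<Longrightarrow> q \<in> {1..k} \<Longrightarrow> p < q \<Longrightarrow> gw q < gw p"
    and i: "i \<in> {1..k}"
    and Lval_eq: "Lval A w gw i = real Ln"
begin

abbreviation n :: "nat \<Rightarrow> nat" where "n q \<equiv> group_size A w gw q"

definition d :: nat where "d = Max ({0} \<union> {h\<in>{1..m}. gw i < V h})"

definition T :: "nat \<Rightarrow> nat" where "T s = Ln + (\<Sum>q\<in>{i..s}. n q)"

lemma cumul_eq_T: "cumul A w gw i s = real (T s)"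
  by (simp add: cumul_def T_def Lval_eq)

lemma T_mono: "s \<le> s' \<Longrightarrow> T s \<le> T s'"
  unfolding T_def by (auto intro!: sum_mono2)

lemma T_Suc: "i \<le> Suc s \<Longrightarrow> T (Suc s) = T s + n (Suc s)"
  unfolding T_def by simp

lemma T_eq_T_i_add: "i \<le> s \<Longrightarrow> real (T s) = real (T i) + (\<Sum>q\<in>{i+1..s}. real (n q))"
  unfolding T_def by (simp add: sum.atLeast_Suc_atMost)

lemma agent_weight_gw: "b \<in> A \<Longrightarrow> \<exists>q\<in>{1..k}. w b = gw q"
  using groups by auto

lemma gw_pos: "q \<in> {1..k} \<Longrightarrow> 0 < gw q"
  using groups weight_pos by (metis image_eqI imageE)

lemma gw_le_iff: "p \<in> {1..k} \<Longrightarrow> q \<in> {1..k} \<Longrightarrow> gw p \<le> gw q \<longleftrightarrow> q \<le> p"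
  by (metis gw_strict_decr le_less linorder_not_le nat_neq_iff)

lemma weight_below_gw:
  assumes "b \<in> A" "s \<in> {1..k}" "w b < gw s"
  shows "Suc s \<le> k \<and> w b \<le> gw (Suc s)"
proof -
  obtain q where q: "q \<in> {1..k}" "w b = gw q" using agent_weight_gw assms(1) by blast
  then have "s < q" using assms gw_le_iff[OF assms(2) q(1)] by auto
  then show ?thesis using q gw_le_iff[of q "Suc s"] by auto
qed

lemma sum_by_group:
  assumes Q: "Q \<subseteq> {1..k}"
  shows "(\<Sum>b\<in>{b\<in>A. w b \<in> gw ` Q}. \<phi> (w b)) = (\<Sum>q\<in>Q. real (n q) * \<phi> (gw q))"
proof -
  have fQ: "finite Q" using Q finite_subset by blast
  have inj: "inj_on gw {1..k}"
    by (rule inj_onI) (metis gw_strict_decr linorder_neq_iff order_less_irrefl)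
  have "{b\<in>A. w b \<in> gw ` Q} = (\<Union>q\<in>Q. {b\<in>A. w b = gw q})" by auto
  then have "(\<Sum>b\<in>{b\<in>A. w b \<in> gw ` Q}. \<phi> (w b)) = (\<Sum>q\<in>Q. \<Sum>b\<in>{b\<in>A. w b = gw q}. \<phi> (w b))"
  proof (simp only:, intro sum.UNION_disjoint ballI impI)
    show "finite {b \<in> A. w b = gw q}" for q using finite_agents by simp
    show "{b \<in> A. w b = gw q} \<inter> {b \<in> A. w b = gw q'} = {}" if "q \<in> Q" "q' \<in> Q" "q \<noteq> q'" for q q'
    proof -
      have "gw q \<noteq> gw q'" using inj_onD[OF inj] Q that by blast
      then show ?thesis by auto
    qed
  qed (use fQ in simp)
  also have "\<dots> = (\<Sum>q\<in>Q. real (n q) * \<phi> (gw q))"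
    by (rule sum.cong) (auto simp: group_size_def)
  finally show ?thesis .
qed

lemma agents_weight_ge: "s \<in> {1..k} \<Longrightarrow> {b\<in>A. gw s \<le> w b} = {b\<in>A. w b \<in> gw ` {1..s}}"
  using agent_weight_gw gw_le_iff by fastforce

lemma agents_weight_between:
  "s \<in> {1..k} \<Longrightarrow> {b\<in>A. gw s \<le> w b \<and> w b < gw i} = {b\<in>A. w b \<in> gw ` {i+1..s}}"
  using agent_weight_gw i gw_le_iff by (fastforce simp: not_le[symmetric])

lemma d_le_m: "d \<le> m"
  unfolding d_def by (subst Max_le_iff) auto

lemma cost_gt_upto_d: "h \<in> {1..d} \<Longrightarrow> gw i < V h"
proof -
  assume h: "h \<in> {1..d}"
  have "d \<in> {0} \<union> {h\<in>{1..m}. gw i < V h}" unfolding d_def by (rule Max_in) auto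
  then have "d \<in> {1..m}" "gw i < V d" using h by auto
  then show ?thesis using cost_antimono[of h d] h by force
qed

lemma cost_le_beyond_d: "h \<in> {1..m} \<Longrightarrow> d < h \<Longrightarrow> V h \<le> gw i"
proof (rule ccontr)
  assume h: "h \<in> {1..m}" "d < h" "\<not> V h \<le> gw i"
  then have "h \<le> d" unfolding d_def by (intro Max_ge) auto
  then show False using h by simp
qed

lemma heavy_cost_le:
  assumes "t \<le> m"
  shows "(\<Sum>h\<in>{h\<in>{1..t}. gw i \<le> w (f h)}. V h) \<le> real (T i) * gw i"
proof -
  have "(\<Sum>h\<in>{h\<in>{1..t}. gw i \<le> w (f h)}. V h) \<le> (\<Sum>h\<in>{h\<in>{1..m}. gw i \<le> w (f h)}. V h)"
    by (rule sum_mono2) (use assms cost_nonneg in auto)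
  also have "\<dots> \<le> (\<Sum>b\<in>{b\<in>A. gw i \<le> w b}. w b)"
    using scaled_cost_le_scaled_weight[of "\<lambda>b. gw i \<le> w b" "\<lambda>_. 1"] by simp
  also have "\<dots> = (\<Sum>q\<in>{1..i}. real (n q) * gw q)"
    using agents_weight_ge[OF i] sum_by_group[of "{1..i}" "\<lambda>x. x"] i by auto
  also have "\<dots> = (\<Sum>q\<in>{1..<i}. real (n q) * gw q) + real (n i) * gw i"
    using i by (simp add: atLeastLessThanSuc_atLeastAtMost[symmetric])
  also have "\<dots> = real (T i) * gw i"
    using Lval_eq gw_pos[OF i] by (simp add: T_def Lval_def field_simps)
  finally show ?thesis .
qed

lemma heavy_tail_cost_le:
  assumes t: "d \<le> t" "t \<le> m"
  shows "(\<Sum>h\<in>{h\<in>{d+1..t}. gw i \<le> w (f h)}. V h) \<le> (real (T i) - real d) * gw i"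
proof -
  have heavy: "gw i \<le> w (f h)" if "h \<in> {1..d}" for h
    using cost_gt_upto_d[OF that] item_le_weight[of h] that d_le_m by force
  have "real d * gw i \<le> (\<Sum>h\<in>{1..d}. V h)"
    using sum_mono[of "{1..d}" "\<lambda>_. gw i" V] cost_gt_upto_d by (simp add: less_imp_le)
  moreover have "{h\<in>{1..t}. gw i \<le> w (f h)} = {1..d} \<union> {h\<in>{d+1..t}. gw i \<le> w (f h)}"
    using heavy t by auto
  then have "(\<Sum>h\<in>{h\<in>{1..t}. gw i \<le> w (f h)}. V h)
      = (\<Sum>h\<in>{1..d}. V h) + (\<Sum>h\<in>{h\<in>{d+1..t}. gw i \<le> w (f h)}. V h)"
    by (simp only:) (rule sum.union_disjoint, auto)
  ultimately show ?thesis
    using heavy_cost_le[OF t(2)] by (simp add: left_diff_distrib)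
qed

lemma d_le_T: "d \<le> T i"
  using heavy_tail_cost_le[of d] d_le_m gw_pos[OF i] by (simp add: zero_le_mult_iff)

lemma middle_cost_le:
  assumes H: "H \<subseteq> {1..m}" and s: "s \<in> {i..k}" and \<theta>: "0 \<le> \<theta>" "\<theta> \<le> gw s"
  shows "(\<Sum>h\<in>{h\<in>H. gw s \<le> w (f h) \<and> w (f h) < gw i}. (1 - \<theta> / w (f h)) * V h)
    \<le> (\<Sum>q\<in>{i+1..s}. real (n q) * gw q) - \<theta> * (\<Sum>q\<in>{i+1..s}. real (n q))"
proof -
  have s1: "s \<in> {1..k}" using s i by auto
  have "(\<Sum>h\<in>{h\<in>H. gw s \<le> w (f h) \<and> w (f h) < gw i}. (1 - \<theta> / w (f h)) * V h)
      \<le> (\<Sum>h\<in>{h\<in>{1..m}. gw s \<le> w (f h) \<and> w (f h) < gw i}. (1 - \<theta> / w (f h)) * V h)"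
  proof (rule sum_mono2)
    fix h assume "h \<in> {h\<in>{1..m}. gw s \<le> w (f h) \<and> w (f h) < gw i} - {h\<in>H. gw s \<le> w (f h) \<and> w (f h) < gw i}"
    then have h: "h \<in> {1..m}" "\<theta> \<le> w (f h)" using \<theta> by auto
    then have "\<theta> / w (f h) \<le> 1" using weight_pos allocation by (simp add: divide_le_eq_1)
    then show "0 \<le> (1 - \<theta> / w (f h)) * V h" using cost_nonneg[OF h(1)] by simp
  qed (use H in auto)
  also have "\<dots> \<le> (\<Sum>b\<in>{b\<in>A. gw s \<le> w b \<and> w b < gw i}. (1 - \<theta> / w b) * w b)"
    by (rule scaled_cost_le_scaled_weight) (use \<theta> weight_pos in \<open>simp add: divide_le_eq\<close>)
  also have "\<dots> = (\<Sum>b\<in>{b\<in>A. w b \<in> gw ` {i+1..s}}. w b - \<theta>)"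
    unfolding agents_weight_between[OF s1, symmetric]
  proof (rule sum.cong)
    fix b assume "b \<in> {b\<in>A. gw s \<le> w b \<and> w b < gw i}"
    then have "0 < w b" using weight_pos by simp
    then show "(1 - \<theta> / w b) * w b = w b - \<theta>" by (simp add: field_simps)
  qed simp
  also have "\<dots> = (\<Sum>q\<in>{i+1..s}. real (n q) * gw q - \<theta> * real (n q))"
    using sum_by_group[of "{i+1..s}" "\<lambda>x. x - \<theta>"] s by (simp add: algebra_simps)
  also have "\<dots> = (\<Sum>q\<in>{i+1..s}. real (n q) * gw q) - \<theta> * (\<Sum>q\<in>{i+1..s}. real (n q))"
    by (simp add: sum_subtractf sum_distrib_left)
  finally show ?thesis .
qed

lemma item_cost_split:
  assumes h: "h \<in> {1..m}" "d < h" and s: "s \<in> {i..k}" and \<theta>: "0 \<le> \<theta>" "\<theta> \<le> gw s"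
    and light: "\<And>b. b \<in> A \<Longrightarrow> w b < gw s \<Longrightarrow> w b \<le> \<theta>"
  shows "V h \<le> \<theta> + (if gw i \<le> w (f h) then (1 - \<theta> / gw i) * V h else 0)
    + (if gw s \<le> w (f h) \<and> w (f h) < gw i then (1 - \<theta> / w (f h)) * V h else 0)"
proof -
  have V: "V h \<le> w (f h)" "V h \<le> gw i" "0 < w (f h)"
    using item_le_weight[OF h(1)] cost_le_beyond_d[OF h] weight_pos allocation h(1) by auto
  have "gw s \<le> gw i" using gw_le_iff[of s i] s i by auto
  consider "gw i \<le> w (f h)" | "gw s \<le> w (f h)" "w (f h) < gw i" | "w (f h) < gw s" by linarith
  then show ?thesis
  proof cases
    case 1
    then show ?thesis using le_add_scaled_excess[OF \<theta>(1) V(2)] gw_pos i by simp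
  next
    case 2
    then show ?thesis using le_add_scaled_excess[OF \<theta>(1) V(1,3)] by simp
  next
    case 3
    then show ?thesis using light[of "f h"] V \<open>gw s \<le> gw i\<close> allocation h(1) by simp
  qed
qed

lemma tail_cost_le:
  assumes s: "s \<in> {i..k}" and \<theta>: "0 \<le> \<theta>" "\<theta> \<le> gw s"
    and light: "\<And>b. b \<in> A \<Longrightarrow> w b < gw s \<Longrightarrow> w b \<le> \<theta>" and t: "d \<le> t" "t \<le> m"
  shows "(\<Sum>h\<in>{d+1..t}. V h)
    \<le> (real (T i) - real d) * gw i + (\<Sum>q\<in>{i+1..s}. real (n q) * gw q) + \<theta> * (real t - real (T s))"
proof -
  define heavy where "heavy = {h\<in>{d+1..t}. gw i \<le> w (f h)}"
  define middle where "middle = {h\<in>{d+1..t}. gw s \<le> w (f h) \<and> w (f h) < gw i}"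
  have "(\<Sum>h\<in>{d+1..t}. V h) \<le> (\<Sum>h\<in>{d+1..t}. \<theta>
      + (if gw i \<le> w (f h) then (1 - \<theta> / gw i) * V h else 0)
      + (if gw s \<le> w (f h) \<and> w (f h) < gw i then (1 - \<theta> / w (f h)) * V h else 0))"
    by (rule sum_mono, rule item_cost_split) (use s \<theta> light t in auto)
  also have "\<dots> = \<theta> * (real t - real d) + (\<Sum>h\<in>heavy. (1 - \<theta> / gw i) * V h)
      + (\<Sum>h\<in>middle. (1 - \<theta> / w (f h)) * V h)"
    unfolding heavy_def middle_def sum.distrib
    by (simp only: sum.inter_filter[OF finite_atLeastAtMost]) (use t in \<open>simp add: of_nat_diff\<close>)
  finally have split: "(\<Sum>h\<in>{d+1..t}. V h) \<le> \<theta> * (real t - real d)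
      + (1 - \<theta> / gw i) * (\<Sum>h\<in>heavy. V h) + (\<Sum>h\<in>middle. (1 - \<theta> / w (f h)) * V h)"
    by (simp add: sum_distrib_left)
  have "gw s \<le> gw i" using gw_le_iff[of s i] s i by auto
  then have "(1 - \<theta> / gw i) * (\<Sum>h\<in>heavy. V h) \<le> (1 - \<theta> / gw i) * ((real (T i) - real d) * gw i)"
    using heavy_tail_cost_le[OF t] gw_pos[OF i] \<theta> unfolding heavy_def
    by (intro mult_left_mono) (simp_all add: divide_le_eq)
  also have "\<dots> = (real (T i) - real d) * (gw i - \<theta>)"
    using gw_pos[OF i] by (simp add: field_simps)
  finally have heavy_part: "(1 - \<theta> / gw i) * (\<Sum>h\<in>heavy. V h) \<le> (real (T i) - real d) * (gw i - \<theta>)" .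
  have middle_part: "(\<Sum>h\<in>middle. (1 - \<theta> / w (f h)) * V h)
      \<le> (\<Sum>q\<in>{i+1..s}. real (n q) * gw q) - \<theta> * (\<Sum>q\<in>{i+1..s}. real (n q))"
    unfolding middle_def by (rule middle_cost_le) (use s \<theta> t in auto)
  have "real (T s) = real (T i) + (\<Sum>q\<in>{i+1..s}. real (n q))" by (rule T_eq_T_i_add) (use s in simp)
  then have "\<theta> * (real t - real d) + (real (T i) - real d) * (gw i - \<theta>) - \<theta> * (\<Sum>q\<in>{i+1..s}. real (n q))
      = (real (T i) - real d) * gw i + \<theta> * (real t - real (T s))"
    by (simp add: algebra_simps)
  then show ?thesis using split heavy_part middle_part by linarith
qed

lemma vstar_upto_T_i: "h \<le> T i \<Longrightarrow> vstar A w gw k i h = gw i"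
  by (simp add: vstar_def cumul_eq_T)

lemma vstar_beyond_T_k: "T k < h \<Longrightarrow> vstar A w gw k i h = 0"
  using T_mono[of i k] i by (simp add: vstar_def cumul_eq_T)

lemma vstar_block:
  assumes s: "i \<le> s" "Suc s \<le> k" and h: "T s < h" "h \<le> T (Suc s)"
  shows "vstar A w gw k i h = gw (Suc s)"
proof -
  have "T i \<le> T s" "T (Suc s) \<le> T k" using s T_mono by auto
  then have "vstar A w gw k i h
      = gw (THE r. r \<in> {i+1..k} \<and> real (T (r - 1)) < real h \<and> real h \<le> real (T r))"
    using h by (simp add: vstar_def cumul_eq_T)
  also have "(THE r. r \<in> {i+1..k} \<and> real (T (r - 1)) < real h \<and> real h \<le> real (T r)) = Suc s"
  proof (rule the_equality)
    fix r assume r: "r \<in> {i+1..k} \<and> real (T (r - 1)) < real h \<and> real h \<le> real (T r)"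
    have "\<not> r \<le> s" using T_mono[of r s] r h by auto
    moreover have "\<not> Suc s \<le> r - 1" using T_mono[of "Suc s" "r - 1"] r h by auto
    ultimately show "r = Suc s" by simp
  qed (use s h in simp)
  finally show ?thesis .
qed

lemma sum_vstar_next_block:
  assumes "i \<le> s" "Suc s \<le> k" "T s \<le> t" "t \<le> T (Suc s)"
  shows "(\<Sum>h\<in>{T s+1..t}. vstar A w gw k i h) = gw (Suc s) * (real t - real (T s))"
proof -
  have "(\<Sum>h\<in>{T s+1..t}. vstar A w gw k i h) = (\<Sum>h\<in>{T s+1..t}. gw (Suc s))"
    by (rule sum.cong) (use assms vstar_block in auto)
  then show ?thesis using assms(3) by (simp add: of_nat_diff)
qed

lemma sum_vstar_beyond_T_k: "T k \<le> t \<Longrightarrow> (\<Sum>h\<in>{T k+1..t}. vstar A w gw k i h) = 0"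
  by (rule sum.neutral) (auto intro: vstar_beyond_T_k)

lemma sum_vstar_upto_T:
  "i \<le> s \<Longrightarrow> s \<le> k \<Longrightarrow>
    (\<Sum>h\<in>{d+1..T s}. vstar A w gw k i h) = (real (T i) - real d) * gw i + (\<Sum>q\<in>{i+1..s}. real (n q) * gw q)"
proof (induction s rule: dec_induct)
  case base
  have "(\<Sum>h\<in>{d+1..T i}. vstar A w gw k i h) = (\<Sum>h\<in>{d+1..T i}. gw i)"
    by (rule sum.cong) (auto intro: vstar_upto_T_i)
  then show ?case using d_le_T by (simp add: of_nat_diff)
next
  case (step s)
  have "(\<Sum>h\<in>{d+1..T (Suc s)}. vstar A w gw k i h)
      = (\<Sum>h\<in>{d+1..T s}. vstar A w gw k i h) + (\<Sum>h\<in>{T s+1..T (Suc s)}. vstar A w gw k i h)"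
    using d_le_T T_mono[of i s] T_mono[of s "Suc s"] step.hyps by (intro sum_nat_ivl_split) auto
  also have "(\<Sum>h\<in>{T s+1..T (Suc s)}. vstar A w gw k i h) = real (n (Suc s)) * gw (Suc s)"
    using sum_vstar_next_block[of s "T (Suc s)"] step T_Suc[of s] by simp
  finally show ?case using step by simp
qed

lemma obtain_block:
  assumes "T i < t"
  obtains s where "s \<in> {i..k}" "T s < t" "Suc s \<le> k \<Longrightarrow> t \<le> T (Suc s)"
proof -
  define s where "s = Max {r\<in>{i..k}. T r < t}"
  have fin: "finite {r\<in>{i..k}. T r < t}" by simp
  have "s \<in> {r\<in>{i..k}. T r < t}" unfolding s_def by (rule Max_in[OF fin]) (use assms i in auto)
  moreover have "t \<le> T (Suc s)" if "Suc s \<le> k"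
    using Max_ge[OF fin, of "Suc s"] that \<open>s \<in> _\<close> unfolding s_def[symmetric] by force
  ultimately show thesis using that by blast
qed

theorem sum_cost_le_sum_vstar:
  assumes t: "d < t" "t \<le> m"
  shows "(\<Sum>h\<in>{d+1..t}. V h) \<le> (\<Sum>h\<in>{d+1..t}. vstar A w gw k i h)"
proof (cases "t \<le> T i")
  case True
  then show ?thesis
    by (intro sum_mono) (use t cost_le_beyond_d vstar_upto_T_i in auto)
next
  case False
  then obtain s where s: "s \<in> {i..k}" "T s < t" and next_block: "Suc s \<le> k \<Longrightarrow> t \<le> T (Suc s)"
    using obtain_block by (metis not_le)
  define \<theta> where "\<theta> = (if Suc s \<le> k then gw (Suc s) else 0)"
  have s1: "s \<in> {1..k}" using s i by auto
  have \<theta>: "0 \<le> \<theta>" "\<theta> \<le> gw s"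
    using gw_pos[OF s1] gw_pos[of "Suc s"] gw_le_iff[of "Suc s" s] s1 by (auto simp: \<theta>_def)
  have light: "w b \<le> \<theta>" if "b \<in> A" "w b < gw s" for b
    using weight_below_gw[OF that(1) s1 that(2)] by (simp add: \<theta>_def)
  have tail: "(\<Sum>h\<in>{T s+1..t}. vstar A w gw k i h) = \<theta> * (real t - real (T s))"
  proof (cases "Suc s \<le> k")
    case True
    then show ?thesis using sum_vstar_next_block[of s t] next_block s by (simp add: \<theta>_def)
  next
    case False
    then have "s = k" using s by simp
    then show ?thesis using sum_vstar_beyond_T_k[of t] s by (simp add: \<theta>_def)
  qed
  have "(\<Sum>h\<in>{d+1..t}. V h)
      \<le> (real (T i) - real d) * gw i + (\<Sum>q\<in>{i+1..s}. real (n q) * gw q) + \<theta> * (real t - real (T s))"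
    using tail_cost_le[OF s(1) \<theta> light] t by simp
  also have "\<dots> = (\<Sum>h\<in>{d+1..T s}. vstar A w gw k i h) + (\<Sum>h\<in>{T s+1..t}. vstar A w gw k i h)"
    using sum_vstar_upto_T[of s] s tail by simp
  also have "\<dots> = (\<Sum>h\<in>{d+1..t}. vstar A w gw k i h)"
    using d_le_T T_mono[of i s] s by (intro sum_nat_ivl_split[symmetric]) auto
  finally show ?thesis .
qed

end

theorem mainTheorem9:
  fixes A :: "'ag set" and w :: "'ag \<Rightarrow> real" and v :: "'ag \<Rightarrow> nat \<Rightarrow> real"
    and m k :: nat and gw :: "nat \<Rightarrow> real" and i :: nat and a :: 'ag
  assumes canon: "canonical A w v m"
    and groups: "w ` A = gw ` {1..k}"
    and decr: "\<forall>p\<in>{1..k}. \<forall>q\<in>{1..k}. p < q \<longrightarrow> gw q < gw p"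
    and i: "i \<in> {1..k}"
    and a: "a \<in> A" "w a = gw i"
  shows "\<forall>t::nat. Max ({0} \<union> {h\<in>{1..m}. v a h > gw i}) < t \<and> t \<le> m \<longrightarrow>
           (\<Sum>h\<in>{Max ({0} \<union> {h\<in>{1..m}. v a h > gw i}) + 1..t}. v a h)
             \<le> (\<Sum>h\<in>{Max ({0} \<union> {h\<in>{1..m}. v a h > gw i}) + 1..t}. vstar A w gw k i h)"
proof -
  have finA: "finite A" and "A \<noteq> {}" and w_pos: "\<And>b. b \<in> A \<Longrightarrow> 0 < w b"
    and dyadic: "\<And>b. b \<in> A \<Longrightarrow> \<exists>p::nat. w b = Max (w ` A) / 2 ^ p"
    and "WMMS A w v m a = w a"
    using canon a unfolding canonical_def by blast+
  then obtain f where f: "f \<in> {1..m} \<rightarrow>\<^sub>E A" "\<And>b. b \<in> A \<Longrightarrow> bundle_cost v a m f b \<le> w b"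
    using WMMS_le_weight_obtains_allocation a(1) by (metis order_refl)
  have "w a \<le> Max (w ` A)" using finA a(1) by simp
  then have "Lval A w gw i \<in> \<nat>"
  proof (intro Lval_in_Nats[of "Max (w ` A)"])
    show "\<exists>p::nat. gw q = Max (w ` A) / 2 ^ p" if "q \<in> {1..i}" for q
      using dyadic groups that i by (metis atLeastAtMost_iff imageE image_eqI order_trans)
    show "gw i \<le> gw q" if "q \<in> {1..<i}" for q
      using decr i that by force
  qed (use w_pos[OF a(1)] in linarith)
  then obtain Ln where "Lval A w gw i = real Ln" by (rule Nats_cases)
  then interpret grouped_agent A w "v a" m f gw k i Ln
    using canon a(1) f groups decr i PiE_mem[OF f(1)]
    by unfold_locales (auto simp: canonical_def bundle_cost_def)
  show ?thesis using sum_cost_le_sum_vstar unfolding d_def by blast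
qed

end
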